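(* Let $n=p'^{\,2}q$ where $p',q$ are distinct primes both at least $7$, and let $A=S(n)$. Then $D_A(n)=5$.
   Context: $\mathbb{Z}_n$ is the integers mod $n$, $U(n)$ its unit group. For nonempty $A\subseteq\mathbb{Z}_n\setminus\{0\}$, a sequence $(x_1,\ldots,x_k)$ is an $A$-weighted zero-sum sequence if $\sum a_ix_i=0$ for some $a_i\in A$; $D_A(n)$ is the least $k$ such that every length-$k$ sequence in $\mathbb{Z}_n$ has a nonempty $A$-weighted zero-sum subsequence. For odd $n=\prod p_i^{r_i}$ and $a\in U(n)$, $\left(\frac{a}{n}\right)=\prod\left(\frac{a}{p_i}\right)^{r_i}$ (Legendre symbols of images mod $p_i$), and $S(n)$ is the kernel of $a\mapsto\left(\frac{a}{n}\right)$ on $U(n)$. *)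

theory Defs
  imports "HOL-Number_Theory.Number_Theory"
begin

text \<open>Z_n is represented by the residues {0..<n} (as naturals).
  A sequence of length k in Z_n is a list xs of residues with length xs = k.\<close>

definition has_weighted_zs_subseq :: "nat \<Rightarrow> nat set \<Rightarrow> nat list \<Rightarrow> bool" where
  "has_weighted_zs_subseq n A xs \<longleftrightarrow>
     (\<exists>I a. I \<subseteq> {..<length xs} \<and> I \<noteq> {} \<and> (\<forall>i\<in>I. a i \<in> A) \<and>
            (\<Sum>i\<in>I. a i * xs ! i) mod n = 0)"

definition davenport_weighted :: "nat \<Rightarrow> nat set \<Rightarrow> nat" where
  "davenport_weighted n A =
     (LEAST k. \<forall>xs. length xs = k \<and> set xs \<subseteq> {0..<n} \<longrightarrow> has_weighted_zs_subseq n A xs)"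

definition gen_symbol :: "nat \<Rightarrow> nat \<Rightarrow> int" where
  "gen_symbol a n = (\<Prod>p\<in>prime_factors n. Legendre (int a) (int p) ^ multiplicity p n)"

definition S_set :: "nat \<Rightarrow> nat set" where
  "S_set n = {a \<in> {0..<n}. coprime a n \<and> gen_symbol a n = 1}"

end

theory Submission
  imports Defs
begin

(* By the Chinese remainder theorem an element of S(p^2 q) is the same as a pair consisting of
   a unit modulo p^2 and a nonzero quadratic residue modulo q.  Hence a subsequence has an
   S(p^2 q)-weighted zero sum as soon as it has a unit-weighted zero sum modulo p^2 and a
   residue-weighted zero sum modulo q.  Modulo p^2 this holds when all terms vanish or when the
   least p-adic valuation (0 or 1) is attained twice, since two units reach every class.  Modulo
   q (q >= 7) every nonzero class is a sum of two residues, so three terms prime to q reach every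
   class, and terms divisible by q are harmless.  A case analysis on five terms always yields a
   subsequence with both properties.  Conversely, for a nonresidue r the sequence
   q, p q, p^2, (q - r) p^2 has no zero sum: modulo q the weights of the last two terms would
   need opposite symbols, and then modulo p^2 those of the first two would be divisible by p. *)

section \<open>Legendre symbols and sums of quadratic residues\<close>

lemma Legendre_cong:
  assumes "[a = b] (mod m)"
  shows "Legendre a m = Legendre b m"
proof -
  have "[a = 0] (mod m) \<longleftrightarrow> [b = 0] (mod m)" and "QuadRes m a \<longleftrightarrow> QuadRes m b"
    using assms cong_sym cong_trans unfolding QuadRes_def by blast+
  then show ?thesis
    unfolding Legendre_def by simp
qed

lemma Legendre_eq_0_iff: "Legendre a m = 0 \<longleftrightarrow> m dvd a"
  unfolding Legendre_def by (auto simp: cong_0_iff)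

lemma Legendre_cases: "\<not> m dvd a \<Longrightarrow> Legendre a m = 1 \<or> Legendre a m = -1"
  unfolding Legendre_def by (auto simp: cong_0_iff)

lemma Legendre_one: "1 < m \<Longrightarrow> Legendre 1 m = 1"
  unfolding Legendre_def QuadRes_def by (auto simp: cong_def intro!: exI[of _ 1])

lemma Legendre_square: "prime p \<Longrightarrow> \<not> p dvd a \<Longrightarrow> Legendre (a^2) p = 1"
  unfolding Legendre_def QuadRes_def
  by (auto simp: cong_0_iff prime_dvd_power_iff intro!: exI[of _ a])

lemma Legendre_mult:
  assumes "prime q" "2 < q"
  shows "Legendre (a * b) (int q) = Legendre a (int q) * Legendre b (int q)"
proof -
  let ?e = "(q - 1) div 2"
  have "[Legendre (a * b) (int q) = (a * b) ^ ?e] (mod int q)"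
    and "[Legendre a (int q) * Legendre b (int q) = a ^ ?e * b ^ ?e] (mod int q)"
    using euler_criterion[OF assms] by (auto intro: cong_mult)
  then have "int q dvd Legendre (a * b) (int q) - Legendre a (int q) * Legendre b (int q)"
    by (metis cong_iff_dvd_diff cong_sym cong_trans power_mult_distrib)
  moreover have "Legendre (a * b) (int q) \<in> {-1, 0, 1}"
    and "Legendre a (int q) * Legendre b (int q) \<in> {-1, 0, 1}"
    by (auto simp: Legendre_def)
  ultimately show ?thesis
    using dvd_imp_le_int[of 2 "int q"] dvd_imp_le_int[of "-2" "int q"] assms(2) by auto
qed

lemma exists_quadratic_nonresidue:
  assumes "prime q" "2 < q"
  obtains r where "r < q" "Legendre (int r) (int q) = -1"
proof -
  obtain g where "residue_primroot q g"
    using prime_primitive_root_exists[of q] assms by auto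
  then have "residue_primroot q (g mod q)"
    by simp
  then have ord: "ord q (g mod q) = q - 1" and cop: "coprime q (g mod q)"
    by (auto simp: residue_primroot_def totient_prime assms(1))
  define e where "e = (q - 1) div 2"
  have "0 < e" "e < q - 1"
    using assms prime_odd_nat[OF assms(1)] unfolding e_def by (auto elim!: oddE)
  then have not_one: "\<not> [(g mod q) ^ e = 1] (mod q)"
    using ord_minimal[of e q "g mod q"] ord by auto
  have "\<not> int q dvd int (g mod q)"
    using cop assms(1) by (metis coprime_absorb_left int_dvd_int_iff not_prime_unit)
  moreover have "Legendre (int (g mod q)) (int q) \<noteq> 1"
  proof
    assume "Legendre (int (g mod q)) (int q) = 1"
    then have "[int (g mod q) ^ e = 1] (mod int q)"
      using euler_criterion[OF assms, of "int (g mod q)"] unfolding e_def by (simp add: cong_sym_eq)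
    with not_one show False
      by (metis cong_int_iff of_nat_1 of_nat_power)
  qed
  ultimately have "Legendre (int (g mod q)) (int q) = -1"
    using Legendre_cases by blast
  moreover have "g mod q < q"
    using assms(1) prime_gt_0_nat by simp
  ultimately show ?thesis
    using that by blast
qed

lemma exists_inverse_mod_prime:
  fixes p x :: int
  assumes "prime p" "\<not> p dvd x"
  obtains w where "[x * w = 1] (mod p)" "\<not> p dvd w"
proof -
  have "coprime x p"
    using assms prime_imp_coprime[of p x] by (auto simp: coprime_commute)
  then obtain w where w: "[x * w = 1] (mod p)"
    using cong_solve_coprime_int by blast
  moreover have "\<not> p dvd w"
  proof
    assume "p dvd w"
    then have "[x * w = 0] (mod p)"
      by (simp add: cong_0_iff)
    with w have "p dvd 1"
      by (metis cong_0_iff cong_sym cong_trans)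
    with assms(1) show False
      using not_prime_unit by blast
  qed
  ultimately show ?thesis
    using that by blast
qed

lemma exists_residues_with_nonresidue_sum:
  assumes "prime q" "2 < q"
  obtains a b where "Legendre a (int q) = 1" "Legendre b (int q) = 1" "Legendre (a + b) (int q) = -1"
proof -
  obtain r where r: "Legendre (int r) (int q) = -1"
    using exists_quadratic_nonresidue[OF assms] by blast
  \<comment> \<open>Otherwise adding 1 would never leave the residues and 0, so there would be no nonresidue.\<close>
  have "\<exists>k. Legendre (int k) (int q) = 1 \<and> Legendre (int k + 1) (int q) = -1"
  proof (rule ccontr)
    assume closed: "\<nexists>k. Legendre (int k) (int q) = 1 \<and> Legendre (int k + 1) (int q) = -1"
    have "Legendre (int k) (int q) \<noteq> -1" for k
    proof (induction k)
      case 0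
      then show ?case
        by (simp add: Legendre_def)
    next
      case (Suc k)
      show ?case
      proof (cases "int q dvd int k")
        case True
        then have "[int (Suc k) = 1] (mod int q)"
          by (simp add: cong_iff_dvd_diff)
        then show ?thesis
          using Legendre_cong Legendre_one assms(2) by fastforce
      next
        case False
        then show ?thesis
          using Suc closed Legendre_cases by (metis add.commute of_nat_Suc)
      qed
    qed
    with r show False
      by blast
  qed
  then obtain k where "Legendre (int k) (int q) = 1" "Legendre (int k + 1) (int q) = -1"
    by blast
  then show ?thesis
    using that[of "int k" 1] Legendre_one assms(2) by simp
qed

lemma sum_of_two_residues:
  assumes q: "prime q" "7 \<le> q" and z: "\<not> int q dvd z"
  obtains a b where "Legendre a (int q) = 1" "Legendre b (int q) = 1" "[a + b = z] (mod int q)"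
proof -
  have q2: "2 < q" and pq: "prime (int q)"
    using q by auto
  obtain a\<^sub>0 b\<^sub>0 where a\<^sub>0: "Legendre a\<^sub>0 (int q) = 1" and b\<^sub>0: "Legendre b\<^sub>0 (int q) = 1"
    and sum: "Legendre (a\<^sub>0 + b\<^sub>0) (int q) = Legendre z (int q)"
  proof (cases "Legendre z (int q) = 1")
    case True
    have "Legendre (c^2) (int q) = 1" if "c \<in> {3, 4, 5}" for c :: int
      using that q zdvd_not_zless[of c "int q"] by (intro Legendre_square[OF pq]) auto
    from this[of 3] this[of 4] this[of 5] True show ?thesis
      using that[of 9 16] by simp
  next
    case False
    with z have "Legendre z (int q) = -1"
      using Legendre_cases by blast
    then show ?thesis
      using that exists_residues_with_nonresidue_sum[OF q(1) q2] by metis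
  qed
  have "\<not> int q dvd a\<^sub>0 + b\<^sub>0"
    using sum z by (metis Legendre_eq_0_iff)
  then obtain w where w: "[(a\<^sub>0 + b\<^sub>0) * w = 1] (mod int q)" "\<not> int q dvd w"
    using exists_inverse_mod_prime[OF pq] by blast
  \<comment> \<open>Since w inverts a0 + b0, the residue t satisfies t (a0 + b0) = z modulo q.\<close>
  define t where "t = z * (a\<^sub>0 + b\<^sub>0) * w^2"
  have "Legendre t (int q) = Legendre z (int q) ^ 2"
    unfolding t_def using Legendre_mult[OF q(1) q2] Legendre_square[OF pq w(2)] sum
    by (simp add: power2_eq_square)
  then have t: "Legendre t (int q) = 1"
    using z Legendre_cases by fastforce
  have "t * a\<^sub>0 + t * b\<^sub>0 - z = z * ((a\<^sub>0 + b\<^sub>0) * w - 1) * ((a\<^sub>0 + b\<^sub>0) * w + 1)"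
    unfolding t_def by (simp add: algebra_simps power2_eq_square)
  then have "[t * a\<^sub>0 + t * b\<^sub>0 = z] (mod int q)"
    using w(1) by (simp add: cong_iff_dvd_diff cong_sym_eq)
  moreover have "Legendre (t * a\<^sub>0) (int q) = 1" "Legendre (t * b\<^sub>0) (int q) = 1"
    using Legendre_mult[OF q(1) q2] t a\<^sub>0 b\<^sub>0 by simp_all
  ultimately show ?thesis
    using that by blast
qed

lemma prime_not_dvd_sub_mult_either:
  fixes p v c d t :: int
  assumes "prime p" "\<not> p dvd v" "\<not> p dvd c - d"
  shows "\<not> p dvd t - c * v \<or> \<not> p dvd t - d * v"
proof (rule ccontr)
  assume "\<not> ?thesis"
  then have "p dvd (t - d * v) - (t - c * v)"
    by (blast intro: dvd_diff)
  also have "(t - d * v) - (t - c * v) = (c - d) * v"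
    by (simp add: algebra_simps)
  finally show False
    using assms
    by (simp add: prime_dvd_mult_iff)
qed

lemma residue_weighted_pair:
  assumes q: "prime q" "7 \<le> q" and v: "Legendre (v\<^sub>1 * v\<^sub>2) (int q) = 1" and s: "\<not> int q dvd s"
  obtains b\<^sub>1 b\<^sub>2 where "Legendre b\<^sub>1 (int q) = 1" "Legendre b\<^sub>2 (int q) = 1"
    "[b\<^sub>1 * v\<^sub>1 + b\<^sub>2 * v\<^sub>2 = s] (mod int q)"
proof -
  have q2: "2 < q" and pq: "prime (int q)"
    using q by auto
  have "\<not> int q dvd v\<^sub>1 * v\<^sub>2"
    using v Legendre_eq_0_iff[of "v\<^sub>1 * v\<^sub>2" "int q"] by simp
  then have v\<^sub>1: "\<not> int q dvd v\<^sub>1" and v\<^sub>2: "\<not> int q dvd v\<^sub>2"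
    by (meson dvd_mult dvd_mult2)+
  then have "\<not> int q dvd v\<^sub>1 * v\<^sub>2^2"
    using pq by (simp add: prime_dvd_mult_iff prime_dvd_power_iff)
  then obtain u where u: "[v\<^sub>1 * v\<^sub>2^2 * u = 1] (mod int q)" "\<not> int q dvd u"
    using exists_inverse_mod_prime[OF pq] by blast
  have "\<not> int q dvd s * u"
    using s u(2) pq by (simp add: prime_dvd_mult_iff)
  then obtain a b where a: "Legendre a (int q) = 1" and b: "Legendre b (int q) = 1"
    and ab: "[a + b = s * u] (mod int q)"
    using sum_of_two_residues[OF q] by blast
  \<comment> \<open>Both weights below multiply v1 and v2 to a common factor v1 v2^2 and are residues.\<close>
  have "a * v\<^sub>2^2 * v\<^sub>1 + b * (v\<^sub>1 * v\<^sub>2) * v\<^sub>2 - s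
      = v\<^sub>1 * v\<^sub>2^2 * (a + b - s * u) + s * (v\<^sub>1 * v\<^sub>2^2 * u - 1)"
    by (simp add: algebra_simps power2_eq_square)
  then have "[a * v\<^sub>2^2 * v\<^sub>1 + b * (v\<^sub>1 * v\<^sub>2) * v\<^sub>2 = s] (mod int q)"
    using ab u(1) by (simp add: cong_iff_dvd_diff)
  moreover have "Legendre (a * v\<^sub>2^2) (int q) = 1" "Legendre (b * (v\<^sub>1 * v\<^sub>2)) (int q) = 1"
    using Legendre_mult[OF q(1) q2] Legendre_square[OF pq v\<^sub>2] a b v by simp_all
  ultimately show ?thesis
    using that by blast
qed

lemma residue_weighted_triple_of_residue_product:
  assumes q: "prime q" "7 \<le> q" and xy: "Legendre (x * y) (int q) = 1" and z: "\<not> int q dvd z"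
  obtains b\<^sub>1 b\<^sub>2 b\<^sub>3 where "Legendre b\<^sub>1 (int q) = 1" "Legendre b\<^sub>2 (int q) = 1"
    "Legendre b\<^sub>3 (int q) = 1" "[b\<^sub>1 * x + b\<^sub>2 * y + b\<^sub>3 * z = t] (mod int q)"
proof -
  have pq: "prime (int q)"
    using q by simp
  have "Legendre 1 (int q) = 1" "Legendre (2^2) (int q) = 1"
    using Legendre_one Legendre_square[OF pq, of 2] zdvd_not_zless[of 2 "int q"] q by auto
  moreover have "\<not> int q dvd t - 4 * z \<or> \<not> int q dvd t - 1 * z"
    using prime_not_dvd_sub_mult_either[OF pq z, of 4 1 t] zdvd_not_zless[of 3 "int q"] q by simp
  ultimately obtain c where c: "Legendre c (int q) = 1" "\<not> int q dvd t - c * z"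
    by fastforce
  obtain b\<^sub>1 b\<^sub>2 where b: "Legendre b\<^sub>1 (int q) = 1" "Legendre b\<^sub>2 (int q) = 1"
    "[b\<^sub>1 * x + b\<^sub>2 * y = t - c * z] (mod int q)"
    by (rule residue_weighted_pair[OF q xy c(2)])
  from b(3) have "[b\<^sub>1 * x + b\<^sub>2 * y + c * z = t] (mod int q)"
    by (simp add: cong_iff_dvd_diff algebra_simps)
  with b(1,2) c(1) show ?thesis
    using that by blast
qed

lemma residue_weighted_triple:
  assumes q: "prime q" "7 \<le> q"
    and v: "\<not> int q dvd v\<^sub>1" "\<not> int q dvd v\<^sub>2" "\<not> int q dvd v\<^sub>3"
  obtains b\<^sub>1 b\<^sub>2 b\<^sub>3 where "Legendre b\<^sub>1 (int q) = 1" "Legendre b\<^sub>2 (int q) = 1"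
    "Legendre b\<^sub>3 (int q) = 1" "[b\<^sub>1 * v\<^sub>1 + b\<^sub>2 * v\<^sub>2 + b\<^sub>3 * v\<^sub>3 = t] (mod int q)"
proof -
  \<comment> \<open>Two of the three symbols Legendre v i agree, and their product is then a residue.\<close>
  have L: "Legendre v (int q) = 1 \<or> Legendre v (int q) = -1" if "\<not> int q dvd v" for v
    using Legendre_cases that by blast
  have "2 < q"
    using q by simp
  then consider "Legendre (v\<^sub>1 * v\<^sub>2) (int q) = 1" | "Legendre (v\<^sub>1 * v\<^sub>3) (int q) = 1"
    | "Legendre (v\<^sub>2 * v\<^sub>3) (int q) = 1"
    using L[OF v(1)] L[OF v(2)] L[OF v(3)] Legendre_mult[OF q(1)] by auto
  then show ?thesis
  proof cases
    case 1
    then show ?thesis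
      using residue_weighted_triple_of_residue_product[OF q 1 v(3)] that by blast
  next
    case 2
    obtain b\<^sub>1 b\<^sub>3 b\<^sub>2 where "Legendre b\<^sub>1 (int q) = 1" "Legendre b\<^sub>3 (int q) = 1"
      "Legendre b\<^sub>2 (int q) = 1" "[b\<^sub>1 * v\<^sub>1 + b\<^sub>3 * v\<^sub>3 + b\<^sub>2 * v\<^sub>2 = t] (mod int q)"
      by (rule residue_weighted_triple_of_residue_product[OF q 2 v(2)])
    then show ?thesis
      using that[of b\<^sub>1 b\<^sub>2 b\<^sub>3] by (simp add: ac_simps)
  next
    case 3
    obtain b\<^sub>2 b\<^sub>3 b\<^sub>1 where "Legendre b\<^sub>2 (int q) = 1" "Legendre b\<^sub>3 (int q) = 1"
      "Legendre b\<^sub>1 (int q) = 1" "[b\<^sub>2 * v\<^sub>2 + b\<^sub>3 * v\<^sub>3 + b\<^sub>1 * v\<^sub>1 = t] (mod int q)"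
      by (rule residue_weighted_triple_of_residue_product[OF q 3 v(1)])
    then show ?thesis
      using that[of b\<^sub>1 b\<^sub>2 b\<^sub>3] by (simp add: ac_simps)
  qed
qed

section \<open>Weighted sums modulo p^k and modulo q\<close>

lemma unit_weighted_pair:
  fixes p :: nat and y\<^sub>1 y\<^sub>2 t :: int
  assumes p: "prime p" "2 < p" and "0 < k"
    and y: "coprime y\<^sub>1 (int p)" "coprime y\<^sub>2 (int p)"
  obtains a\<^sub>1 a\<^sub>2 where "coprime a\<^sub>1 (int p)" "coprime a\<^sub>2 (int p)"
    "[a\<^sub>1 * y\<^sub>1 + a\<^sub>2 * y\<^sub>2 = t] (mod int p ^ k)"
proof -
  have pp: "prime (int p)"
    using p by simp
  have cop_iff: "coprime x (int p) \<longleftrightarrow> \<not> int p dvd x" for x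
    using pp by (metis coprime_commute prime_imp_coprime coprime_absorb_left not_prime_unit)
  have "\<not> int p dvd t - 2 * y\<^sub>2 \<or> \<not> int p dvd t - 1 * y\<^sub>2"
    using prime_not_dvd_sub_mult_either[OF pp, of y\<^sub>2 2 1 t] y(2) cop_iff p(2) by simp
  then obtain a\<^sub>2 where a\<^sub>2: "a\<^sub>2 \<in> {1, 2}" "\<not> int p dvd t - a\<^sub>2 * y\<^sub>2"
    by blast
  obtain u where u: "[y\<^sub>1 * u = 1] (mod int p ^ k)"
    using cong_solve_coprime_int[of y\<^sub>1 "int p ^ k"] y(1) by auto
  then have "[y\<^sub>1 * u = 1] (mod int p)"
    using \<open>0 < k\<close> by (metis cong_dvd_modulus dvd_power)
  then have "coprime u (int p)"
    by (metis coprime_iff_invertible_int mult.commute mult.left_commute coprime_commute)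
  moreover have "coprime (t - a\<^sub>2 * y\<^sub>2) (int p)"
    using a\<^sub>2(2) cop_iff by blast
  ultimately have "coprime ((t - a\<^sub>2 * y\<^sub>2) * u) (int p)"
    by simp
  moreover have "(t - a\<^sub>2 * y\<^sub>2) * u * y\<^sub>1 + a\<^sub>2 * y\<^sub>2 - t = (t - a\<^sub>2 * y\<^sub>2) * (y\<^sub>1 * u - 1)"
    by (simp add: algebra_simps)
  then have "[(t - a\<^sub>2 * y\<^sub>2) * u * y\<^sub>1 + a\<^sub>2 * y\<^sub>2 = t] (mod int p ^ k)"
    using u by (simp add: cong_iff_dvd_diff)
  moreover have "coprime a\<^sub>2 (int p)"
    using a\<^sub>2(1) cop_iff zdvd_not_zless[of 2 "int p"] p(2) by auto
  ultimately show ?thesis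
    using that by blast
qed

definition weighted_sum_reaches :: "(int \<Rightarrow> bool) \<Rightarrow> int \<Rightarrow> 'i set \<Rightarrow> ('i \<Rightarrow> int) \<Rightarrow> int \<Rightarrow> bool"
  where "weighted_sum_reaches P m I f t \<longleftrightarrow>
    (\<exists>w. (\<forall>l\<in>I. P (w l)) \<and> [(\<Sum>l\<in>I. w l * f l) = t] (mod m))"

lemma weighted_sum_reaches_extend:
  assumes "finite I" "J \<subseteq> I" "P 1"
    and "weighted_sum_reaches P m J f (t - (\<Sum>l\<in>I - J. f l))"
  shows "weighted_sum_reaches P m I f t"
proof -
  obtain w where w: "\<forall>l\<in>J. P (w l)" "[(\<Sum>l\<in>J. w l * f l) = t - (\<Sum>l\<in>I - J. f l)] (mod m)"
    using assms(4) unfolding weighted_sum_reaches_def by blast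
  define w' where "w' l = (if l \<in> J then w l else 1)" for l
  have "(\<Sum>l\<in>I. w' l * f l) = (\<Sum>l\<in>J. w l * f l) + (\<Sum>l\<in>I - J. f l)"
    using assms(1,2) unfolding w'_def
    by (simp add: sum.subset_diff[of J I] finite_subset sum.If_cases Int_absorb1 Diff_eq)
  then have "[(\<Sum>l\<in>I. w' l * f l) = t] (mod m)"
    using w(2) by (simp add: cong_iff_dvd_diff algebra_simps)
  moreover have "\<forall>l\<in>I. P (w' l)"
    using w(1) assms(3) unfolding w'_def by simp
  ultimately show ?thesis
    unfolding weighted_sum_reaches_def by blast
qed

lemma weighted_sum_reaches_zero_if_dvd:
  assumes "P 1" "\<forall>l\<in>I. m dvd f l"
  shows "weighted_sum_reaches P m I f 0"
  unfolding weighted_sum_reaches_def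
  using assms by (intro exI[of _ "\<lambda>_. 1"]) (simp add: cong_0_iff dvd_sum)

lemma weighted_sum_reaches_pairI:
  assumes "i \<noteq> j" "P a" "P b" "[a * f i + b * f j = t] (mod m)"
  shows "weighted_sum_reaches P m {i, j} f t"
  unfolding weighted_sum_reaches_def
  using assms by (intro exI[of _ "\<lambda>l. if l = i then a else b"]) simp

lemma weighted_sum_reaches_tripleI:
  assumes "i \<noteq> j" "i \<noteq> k" "j \<noteq> k" "P a" "P b" "P c"
    and "[a * f i + b * f j + c * f k = t] (mod m)"
  shows "weighted_sum_reaches P m {i, j, k} f t"
  unfolding weighted_sum_reaches_def
  using assms by (intro exI[of _ "\<lambda>l. if l = i then a else if l = j then b else c"]) (simp add: ac_simps)

lemma weighted_sum_reaches_scale: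
  assumes "\<forall>l\<in>I. f l = c * g l" "weighted_sum_reaches P m I g t"
  shows "weighted_sum_reaches P (c * m) I f (c * t)"
proof -
  obtain w where w: "\<forall>l\<in>I. P (w l)" "m dvd (\<Sum>l\<in>I. w l * g l) - t"
    using assms(2) unfolding weighted_sum_reaches_def cong_iff_dvd_diff by blast
  have "(\<Sum>l\<in>I. w l * f l) - c * t = c * ((\<Sum>l\<in>I. w l * g l) - t)"
    using assms(1) by (simp add: sum_distrib_left right_diff_distrib ac_simps)
  then have "[(\<Sum>l\<in>I. w l * f l) = c * t] (mod c * m)"
    using w(2) by (simp add: cong_iff_dvd_diff)
  with w(1) show ?thesis
    unfolding weighted_sum_reaches_def by blast
qed

abbreviation unit_zero_sum :: "nat \<Rightarrow> 'i set \<Rightarrow> ('i \<Rightarrow> int) \<Rightarrow> bool"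
  where "unit_zero_sum p I f \<equiv> weighted_sum_reaches (\<lambda>a. coprime a (int p)) (int p ^ 2) I f 0"

abbreviation residue_zero_sum :: "nat \<Rightarrow> 'i set \<Rightarrow> ('i \<Rightarrow> int) \<Rightarrow> bool"
  where "residue_zero_sum q I f \<equiv> weighted_sum_reaches (\<lambda>b. Legendre b (int q) = 1) (int q) I f 0"

lemma unit_weighted_zero_sum_mod_prime_power:
  fixes p :: nat and f :: "'i \<Rightarrow> int"
  assumes p: "prime p" "2 < p" and "0 < k" "finite I"
    and units: "2 \<le> card {l\<in>I. \<not> int p dvd f l}"
  shows "weighted_sum_reaches (\<lambda>a. coprime a (int p)) (int p ^ k) I f 0"
proof -
  obtain J where J: "J \<subseteq> {l\<in>I. \<not> int p dvd f l}" "card J = 2"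
    using obtain_subset_with_card_n[OF units] by blast
  then obtain i j where ij: "J = {i, j}" "i \<noteq> j"
    by (auto simp: card_2_iff)
  have "coprime (f l) (int p)" if "l \<in> J" for l
    using J(1) that p(1) prime_imp_coprime[of "int p" "f l"] by (auto simp: coprime_commute)
  then have units_ij: "coprime (f i) (int p)" "coprime (f j) (int p)"
    using ij(1) by auto
  obtain a\<^sub>1 a\<^sub>2 where a: "coprime a\<^sub>1 (int p)" "coprime a\<^sub>2 (int p)"
    "[a\<^sub>1 * f i + a\<^sub>2 * f j = 0 - (\<Sum>l\<in>I - J. f l)] (mod int p ^ k)"
    by (rule unit_weighted_pair[OF p \<open>0 < k\<close> units_ij])
  have reach: "weighted_sum_reaches (\<lambda>a. coprime a (int p)) (int p ^ k) J f (0 - (\<Sum>l\<in>I - J. f l))"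
    using weighted_sum_reaches_pairI[where P = "\<lambda>a. coprime a (int p)", OF ij(2) a] ij(1)
    by simp
  have "J \<subseteq> I"
    using J(1) by blast
  from weighted_sum_reaches_extend[OF \<open>finite I\<close> this _ reach] show ?thesis
    by simp
qed

lemma unit_zero_sum_of_multiples:
  fixes p :: nat and f :: "'i \<Rightarrow> int"
  assumes p: "prime p" "2 < p" and "finite I" and dvd: "\<forall>l\<in>I. int p dvd f l"
    and "2 \<le> card {l\<in>I. \<not> int p ^ 2 dvd f l}"
  shows "unit_zero_sum p I f"
proof -
  have f: "\<forall>l\<in>I. f l = int p * (f l div int p)"
    using dvd by simp
  have "int p ^ 2 dvd int p * y \<longleftrightarrow> int p dvd y" for y
    using p by (simp add: power2_eq_square)
  with f have "{l\<in>I. \<not> int p ^ 2 dvd f l} = {l\<in>I. \<not> int p dvd f l div int p}"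
    by (metis (no_types, lifting))
  then have "weighted_sum_reaches (\<lambda>a. coprime a (int p)) (int p ^ 1) I (\<lambda>l. f l div int p) 0"
    using assms(5) by (intro unit_weighted_zero_sum_mod_prime_power[OF p _ \<open>finite I\<close>]) simp_all
  from weighted_sum_reaches_scale[OF f this] show ?thesis
    by (simp add: power2_eq_square)
qed

lemma residue_zero_sum_of_few_multiples:
  fixes q :: nat and f :: "'i \<Rightarrow> int"
  assumes q: "prime q" "7 \<le> q" and "finite I"
    and few: "card {l\<in>I. int q dvd f l} + 3 \<le> card I"
  shows "residue_zero_sum q I f"
proof -
  have "{l\<in>I. \<not> int q dvd f l} = I - {l\<in>I. int q dvd f l}"
    by blast
  then have nonzero: "3 \<le> card {l\<in>I. \<not> int q dvd f l}"
    using few \<open>finite I\<close> by (simp add: card_Diff_subset)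
  obtain J where J: "J \<subseteq> {l\<in>I. \<not> int q dvd f l}" "card J = 3"
    using obtain_subset_with_card_n[OF nonzero] by blast
  then obtain i j k where ijk: "J = {i, j, k}" "i \<noteq> j" "i \<noteq> k" "j \<noteq> k"
    by (auto simp: card_3_iff)
  have nonzero_ijk: "\<not> int q dvd f i" "\<not> int q dvd f j" "\<not> int q dvd f k"
    using J(1) ijk(1) by auto
  obtain b\<^sub>1 b\<^sub>2 b\<^sub>3 where b: "Legendre b\<^sub>1 (int q) = 1" "Legendre b\<^sub>2 (int q) = 1"
    "Legendre b\<^sub>3 (int q) = 1" "[b\<^sub>1 * f i + b\<^sub>2 * f j + b\<^sub>3 * f k = 0 - (\<Sum>l\<in>I - J. f l)] (mod int q)"
    by (rule residue_weighted_triple[OF q nonzero_ijk])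
  have reach: "weighted_sum_reaches (\<lambda>b. Legendre b (int q) = 1) (int q) J f (0 - (\<Sum>l\<in>I - J. f l))"
    using weighted_sum_reaches_tripleI[where P = "\<lambda>b. Legendre b (int q) = 1", OF ijk(2-4) b] ijk(1)
    by simp
  have "J \<subseteq> I"
    using J(1) by blast
  from weighted_sum_reaches_extend[OF \<open>finite I\<close> this _ reach] show ?thesis
    using Legendre_one[of "int q"] q by simp
qed

section \<open>The weight set S(p^2 q)\<close>

lemma gen_symbol_prime_square_times_prime:
  assumes p: "prime p" and q: "prime q" and "p \<noteq> q" and c: "coprime c p"
  shows "gen_symbol c (p^2 * q) = Legendre (int c) (int q)"
proof -
  have "\<not> p dvd q" "\<not> q dvd p^2"
    using p q \<open>p \<noteq> q\<close> primes_dvd_imp_eq[of p q] primes_dvd_imp_eq[of q p]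
    by (auto simp: prime_dvd_power_iff)
  then have mult_p: "multiplicity p (p^2 * q) = 2" and mult_q: "multiplicity q (p^2 * q) = 1"
    using multiplicity_prime_elem_times_other[of p q "p^2"] multiplicity_prime_elem_times_other[of q "p^2" q]
      p q by (simp_all add: mult.commute multiplicity_prime_power)
  have "prime_factors (p^2 * q) = {p, q}"
    using p q by (auto simp: prime_factors_product prime_factors_power prime_prime_factors)
  moreover have "\<not> int p dvd int c"
    using c p by (metis coprime_absorb_right coprime_commute int_dvd_int_iff not_prime_unit)
  then have "Legendre (int c) (int p) ^ 2 = 1"
    using Legendre_cases by (metis power2_minus power_one)
  ultimately show ?thesis
    unfolding gen_symbol_def using \<open>p \<noteq> q\<close> mult_p mult_q by simp
qed

lemma S_set_prime_square_times_prime_iff: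
  assumes p: "prime p" and q: "prime q" and "p \<noteq> q"
  shows "c \<in> S_set (p^2 * q) \<longleftrightarrow> c < p^2 * q \<and> coprime c p \<and> Legendre (int c) (int q) = 1"
proof -
  have "coprime c q" if "Legendre (int c) (int q) = 1"
  proof -
    have "\<not> q dvd c"
      using that Legendre_eq_0_iff[of "int c" "int q"] by auto
    then show ?thesis
      using q prime_imp_coprime coprime_commute by blast
  qed
  then show ?thesis
    unfolding S_set_def using gen_symbol_prime_square_times_prime[OF assms] by auto
qed

lemma S_set_prime_square_times_prime_crt:
  assumes p: "prime p" and q: "prime q" and "p \<noteq> q"
    and a: "coprime a (int p)" and b: "Legendre b (int q) = 1"
  obtains c where "c \<in> S_set (p^2 * q)" "[int c = a] (mod int p ^ 2)" "[int c = b] (mod int q)"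
proof -
  have "coprime (int p ^ 2) (int q)"
    using p q \<open>p \<noteq> q\<close> by (simp add: primes_coprime)
  then obtain x where x: "[x = a] (mod int p ^ 2)" "[x = b] (mod int q)"
    using binary_chinese_remainder_int by blast
  define c where "c = nat (x mod (int p ^ 2 * int q))"
  have "0 < int p ^ 2 * int q"
    using p q by (simp add: prime_gt_0_nat)
  then have "int c = x mod (int p ^ 2 * int q)" and "c < p^2 * q"
    unfolding c_def by (simp_all add: nat_less_iff)
  then have "[int c = x] (mod int p ^ 2 * int q)"
    by (simp add: cong_def)
  then have cp: "[int c = a] (mod int p ^ 2)" and cq: "[int c = b] (mod int q)"
    using x by (meson cong_dvd_modulus cong_trans dvd_triv_left dvd_triv_right)+
  have "[int c = a] (mod int p)"
    using cong_dvd_modulus[OF cp, of "int p"] by simp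
  then have "coprime (int c) (int p)"
    using cong_imp_coprime[OF cong_sym a] by blast
  then have "coprime c p"
    by simp
  moreover have "Legendre (int c) (int q) = 1"
    using Legendre_cong[OF cq] b by simp
  ultimately have "c \<in> S_set (p^2 * q)"
    using S_set_prime_square_times_prime_iff[OF p q \<open>p \<noteq> q\<close>] \<open>c < p^2 * q\<close> by simp
  with cp cq show ?thesis
    using that by blast
qed

lemma has_weighted_zs_subseq_of_local_zero_sums:
  assumes p: "prime p" and q: "prime q" and "p \<noteq> q"
    and I: "I \<subseteq> {..<length xs}" "I \<noteq> {}"
    and mod_p2: "unit_zero_sum p I (\<lambda>l. int (xs ! l))"
    and mod_q: "residue_zero_sum q I (\<lambda>l. int (xs ! l))"
  shows "has_weighted_zs_subseq (p^2 * q) (S_set (p^2 * q)) xs"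
proof -
  obtain \<alpha> where \<alpha>: "\<forall>l\<in>I. coprime (\<alpha> l) (int p)"
    "[(\<Sum>l\<in>I. \<alpha> l * int (xs ! l)) = 0] (mod int p ^ 2)"
    using mod_p2 unfolding weighted_sum_reaches_def by blast
  obtain \<beta> where \<beta>: "\<forall>l\<in>I. Legendre (\<beta> l) (int q) = 1"
    "[(\<Sum>l\<in>I. \<beta> l * int (xs ! l)) = 0] (mod int q)"
    using mod_q unfolding weighted_sum_reaches_def by blast
  have crt: "\<forall>l\<in>I. \<exists>c. c \<in> S_set (p^2 * q) \<and> [int c = \<alpha> l] (mod int p ^ 2) \<and> [int c = \<beta> l] (mod int q)"
  proof
    fix l
    assume "l \<in> I"
    obtain c where "c \<in> S_set (p^2 * q)" "[int c = \<alpha> l] (mod int p ^ 2)" "[int c = \<beta> l] (mod int q)"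
      by (rule S_set_prime_square_times_prime_crt[OF p q \<open>p \<noteq> q\<close> \<alpha>(1)[rule_format, OF \<open>l \<in> I\<close>]
            \<beta>(1)[rule_format, OF \<open>l \<in> I\<close>]])
    then show "\<exists>c. c \<in> S_set (p^2 * q) \<and> [int c = \<alpha> l] (mod int p ^ 2) \<and> [int c = \<beta> l] (mod int q)"
      by blast
  qed
  obtain c where c: "\<forall>l\<in>I. c l \<in> S_set (p^2 * q) \<and> [int (c l) = \<alpha> l] (mod int p ^ 2)
      \<and> [int (c l) = \<beta> l] (mod int q)"
    using bchoice[OF crt] by blast
  define s where "s = (\<Sum>l\<in>I. c l * xs ! l)"
  have s: "int s = (\<Sum>l\<in>I. int (c l) * int (xs ! l))"
    by (simp add: s_def)
  have "[int s = (\<Sum>l\<in>I. \<alpha> l * int (xs ! l))] (mod int p ^ 2)"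
    unfolding s using c by (intro cong_sum cong_mult cong_refl) auto
  from cong_trans[OF this \<alpha>(2)] have "int p ^ 2 dvd int s"
    by (simp only: cong_0_iff)
  moreover have "[int s = (\<Sum>l\<in>I. \<beta> l * int (xs ! l))] (mod int q)"
    unfolding s using c by (intro cong_sum cong_mult cong_refl) auto
  from cong_trans[OF this \<beta>(2)] have "int q dvd int s"
    by (simp only: cong_0_iff)
  moreover have "coprime (int p ^ 2) (int q)"
    using p q \<open>p \<noteq> q\<close> by (simp add: primes_coprime)
  ultimately have "int (p^2 * q) dvd int s"
    unfolding of_nat_mult of_nat_power by (rule divides_mult)
  then have "(\<Sum>l\<in>I. c l * xs ! l) mod (p^2 * q) = 0"
    unfolding int_dvd_int_iff s_def by simp
  moreover have "\<forall>l\<in>I. c l \<in> S_set (p^2 * q)"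
    using c by blast
  ultimately show ?thesis
    unfolding has_weighted_zs_subseq_def using I by (intro exI[of _ I] exI[of _ c]) simp
qed

section \<open>Five terms always admit a weighted zero sum\<close>

lemma card_nested_filters:
  assumes "finite X" and PQ: "\<And>x. P x \<Longrightarrow> Q x"
  shows "card X = card {x\<in>X. \<not> Q x} + card {x\<in>X. Q x \<and> \<not> P x} + card {x\<in>X. P x}"
proof -
  define A B C where "A = {x\<in>X. \<not> Q x}" and "B = {x\<in>X. Q x \<and> \<not> P x}" and "C = {x\<in>X. P x}"
  have "X = (A \<union> B) \<union> C" "A \<inter> B = {}" "A \<inter> C = {}" "B \<inter> C = {}"
    unfolding A_def B_def C_def using PQ by auto
  moreover have "finite A" "finite B" "finite C"
    using assms(1) unfolding A_def B_def C_def by simp_all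
  ultimately have "card X = card A + card B + card C"
    by (simp add: card_Un_disjoint Int_Un_distrib2)
  then show ?thesis
    unfolding A_def B_def C_def .
qed

lemma exists_zero_sums_among_multiples_of_q:
  fixes p q :: nat and f :: "'i \<Rightarrow> int"
  assumes p: "prime p" "2 < p" and q: "prime q" and "finite Z" and Z: "\<forall>l\<in>Z. int q dvd f l"
    and "(\<exists>l\<in>Z. int p ^ 2 dvd f l) \<or> 2 \<le> card {l\<in>Z. \<not> int p dvd f l}
      \<or> 2 \<le> card {l\<in>Z. int p dvd f l \<and> \<not> int p ^ 2 dvd f l}"
  shows "\<exists>I\<subseteq>Z. I \<noteq> {} \<and> unit_zero_sum p I f \<and> residue_zero_sum q I f"
proof -
  have residue: "residue_zero_sum q I f" if "I \<subseteq> Z" for I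
    using that Z Legendre_one[of "int q"] prime_gt_1_nat[OF q]
    by (intro weighted_sum_reaches_zero_if_dvd) auto
  have found: "\<exists>I\<subseteq>Z. I \<noteq> {} \<and> unit_zero_sum p I f \<and> residue_zero_sum q I f"
    if "I \<subseteq> Z" "I \<noteq> {}" "unit_zero_sum p I f" for I
    using that residue[OF that(1)] by (intro exI[of _ I] conjI)
  consider l where "l \<in> Z" "int p ^ 2 dvd f l" | "2 \<le> card {l\<in>Z. \<not> int p dvd f l}"
    | "2 \<le> card {l\<in>Z. int p dvd f l \<and> \<not> int p ^ 2 dvd f l}"
    using assms(6) by blast
  then show ?thesis
  proof cases
    case 1
    have "unit_zero_sum p {l} f"
      using 1(2) by (intro weighted_sum_reaches_zero_if_dvd) simp_all
    then show ?thesis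
      using found[of "{l}"] 1(1) by simp
  next
    case 2
    then have "unit_zero_sum p Z f"
      by (rule unit_weighted_zero_sum_mod_prime_power[OF p _ \<open>finite Z\<close>, of 2, simplified])
    moreover have "Z \<noteq> {}"
      using 2 by auto
    ultimately show ?thesis
      using found[of Z] by simp
  next
    case 3
    let ?I = "{l\<in>Z. int p dvd f l \<and> \<not> int p ^ 2 dvd f l}"
    have "finite ?I" "\<forall>l\<in>?I. int p dvd f l"
      using \<open>finite Z\<close> by simp_all
    moreover have "{l\<in>?I. \<not> int p ^ 2 dvd f l} = ?I"
      by blast
    then have "2 \<le> card {l\<in>?I. \<not> int p ^ 2 dvd f l}"
      using 3 by (simp only:)
    ultimately have "unit_zero_sum p ?I f"
      by (rule unit_zero_sum_of_multiples[OF p])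
    moreover have "0 < card ?I"
      using 3 by linarith
    then have "?I \<noteq> {}"
      by (simp add: card_gt_0_iff)
    ultimately show ?thesis
      using found[of ?I] by simp
  qed
qed

lemma exists_zero_sums_few_multiples_of_q:
  fixes p q :: nat and f :: "'i \<Rightarrow> int"
  assumes p: "prime p" "2 < p" and q: "prime q" "7 \<le> q" and X: "finite X" "5 \<le> card X"
    and few: "card {l\<in>X. int q dvd f l} \<le> 2"
    and no_sq_multiple_of_q: "\<forall>l\<in>X. int p ^ 2 dvd f l \<longrightarrow> \<not> int q dvd f l"
    and few_val1_multiples: "card {l\<in>X. int p dvd f l \<and> \<not> int p ^ 2 dvd f l \<and> int q dvd f l} \<le> 1"
  shows "\<exists>I\<subseteq>X. I \<noteq> {} \<and> unit_zero_sum p I f \<and> residue_zero_sum q I f"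
proof -
  have found: "\<exists>I\<subseteq>X. I \<noteq> {} \<and> unit_zero_sum p I f \<and> residue_zero_sum q I f"
    if "I \<subseteq> X" "I \<noteq> {}" "unit_zero_sum p I f" "card {l\<in>I. int q dvd f l} + 3 \<le> card I" for I
    using that(1-3) residue_zero_sum_of_few_multiples[OF q finite_subset[OF that(1) X(1)] that(4)]
    by (intro exI[of _ I] conjI)
  define C\<^sub>0 where "C\<^sub>0 = {l\<in>X. \<not> int p dvd f l}"
  define C\<^sub>1 where "C\<^sub>1 = {l\<in>X. int p dvd f l \<and> \<not> int p ^ 2 dvd f l}"
  define C\<^sub>2 where "C\<^sub>2 = {l\<in>X. int p ^ 2 dvd f l}"
  have p_dvd: "int p dvd f l" if "int p ^ 2 dvd f l" for l
    using that dvd_power[of 2 "int p"] dvd_trans by fastforce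
  have card_X: "card X = card C\<^sub>0 + card C\<^sub>1 + card C\<^sub>2"
    unfolding C\<^sub>0_def C\<^sub>1_def C\<^sub>2_def by (rule card_nested_filters[OF X(1) p_dvd])
  have C12: "finite C\<^sub>1" "finite C\<^sub>2" "C\<^sub>1 \<inter> C\<^sub>2 = {}"
    using X(1) unfolding C\<^sub>1_def C\<^sub>2_def by auto
  consider "2 \<le> card C\<^sub>0" | "card C\<^sub>0 \<le> 1" "2 \<le> card C\<^sub>1" | "card C\<^sub>0 \<le> 1" "card C\<^sub>1 \<le> 1"
    by linarith
  then show ?thesis
  proof cases
    case 1
    then have "unit_zero_sum p X f"
      using unit_weighted_zero_sum_mod_prime_power[OF p _ X(1), of 2] unfolding C\<^sub>0_def by simp
    moreover have "card {l\<in>X. int q dvd f l} + 3 \<le> card X" "X \<noteq> {}"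
      using few X(2) by auto
    ultimately show ?thesis
      using found[of X] by simp
  next
    case 2
    let ?I = "C\<^sub>1 \<union> C\<^sub>2"
    have "?I \<subseteq> X" "{l\<in>?I. \<not> int p ^ 2 dvd f l} = C\<^sub>1" "\<forall>l\<in>?I. int p dvd f l"
      unfolding C\<^sub>1_def C\<^sub>2_def using p_dvd by auto
    then have "unit_zero_sum p ?I f"
      using unit_zero_sum_of_multiples[OF p finite_subset[OF _ X(1)], of ?I f] 2 by simp
    moreover have "{l\<in>?I. int q dvd f l} = {l\<in>X. int p dvd f l \<and> \<not> int p ^ 2 dvd f l \<and> int q dvd f l}"
      using no_sq_multiple_of_q unfolding C\<^sub>1_def C\<^sub>2_def by blast
    then have "card {l\<in>?I. int q dvd f l} + 3 \<le> card ?I"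
      using few_val1_multiples card_X X(2) 2 C12 by (simp add: card_Un_disjoint)
    moreover have "?I \<noteq> {}"
      using 2 C12 by auto
    ultimately show ?thesis
      using found[of ?I] \<open>?I \<subseteq> X\<close> by simp
  next
    case 3
    have no_multiples: "{l\<in>C\<^sub>2. int q dvd f l} = {}" and "C\<^sub>2 \<subseteq> X"
      using no_sq_multiple_of_q unfolding C\<^sub>2_def by auto
    moreover have "3 \<le> card C\<^sub>2"
      using card_X X(2) 3 by linarith
    then have "card {l\<in>C\<^sub>2. int q dvd f l} + 3 \<le> card C\<^sub>2" "C\<^sub>2 \<noteq> {}"
      unfolding no_multiples by auto
    moreover have "unit_zero_sum p C\<^sub>2 f"
      unfolding C\<^sub>2_def by (intro weighted_sum_reaches_zero_if_dvd) simp_all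
    ultimately show ?thesis
      using found[of C\<^sub>2] by simp
  qed
qed

lemma exists_local_zero_sums:
  fixes p q :: nat and f :: "'i \<Rightarrow> int"
  assumes p: "prime p" "2 < p" and q: "prime q" "7 \<le> q" and X: "finite X" "5 \<le> card X"
  shows "\<exists>I\<subseteq>X. I \<noteq> {} \<and> unit_zero_sum p I f \<and> residue_zero_sum q I f"
proof -
  have found: "\<exists>I\<subseteq>X. I \<noteq> {} \<and> unit_zero_sum p I f \<and> residue_zero_sum q I f"
    if "I \<subseteq> X" "I \<noteq> {}" "unit_zero_sum p I f" "residue_zero_sum q I f" for I
    using that by (intro exI[of _ I] conjI)
  define Z where "Z = {l\<in>X. int q dvd f l}"
  have "finite Z" "Z \<subseteq> X" "\<forall>l\<in>Z. int q dvd f l"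
    using X(1) unfolding Z_def by auto
  show ?thesis
  proof (cases "(\<exists>l\<in>Z. int p ^ 2 dvd f l) \<or> 2 \<le> card {l\<in>Z. \<not> int p dvd f l}
      \<or> 2 \<le> card {l\<in>Z. int p dvd f l \<and> \<not> int p ^ 2 dvd f l}")
    case True
    obtain I where I: "I \<subseteq> Z \<and> I \<noteq> {} \<and> unit_zero_sum p I f \<and> residue_zero_sum q I f"
      using exists_zero_sums_among_multiples_of_q[OF p q(1) \<open>finite Z\<close> \<open>\<forall>l\<in>Z. int q dvd f l\<close> True]
      by (elim exE)
    then have "I \<subseteq> Z" "I \<noteq> {}" "unit_zero_sum p I f" "residue_zero_sum q I f"
      by simp_all
    from found[OF subset_trans[OF this(1) \<open>Z \<subseteq> X\<close>] this(2-4)] show ?thesis .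
  next
    case False
    let ?A = "{l\<in>Z. \<not> int p dvd f l}" and ?B = "{l\<in>Z. int p dvd f l \<and> \<not> int p ^ 2 dvd f l}"
    have "Z \<subseteq> ?A \<union> ?B"
      using False by auto
    then have "card Z \<le> card (?A \<union> ?B)"
      using card_mono[of "?A \<union> ?B" Z] \<open>finite Z\<close> by simp
    also have "\<dots> \<le> card ?A + card ?B"
      by (rule card_Un_le)
    also have "\<dots> \<le> 2"
      using False by auto
    finally have few: "card {l\<in>X. int q dvd f l} \<le> 2"
      unfolding Z_def .
    have no_sq_multiple_of_q: "\<forall>l\<in>X. int p ^ 2 dvd f l \<longrightarrow> \<not> int q dvd f l"
      using False unfolding Z_def by blast
    have "{l\<in>X. int p dvd f l \<and> \<not> int p ^ 2 dvd f l \<and> int q dvd f l} = ?B"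
      unfolding Z_def by blast
    then have few_val1_multiples:
        "card {l\<in>X. int p dvd f l \<and> \<not> int p ^ 2 dvd f l \<and> int q dvd f l} \<le> 1"
      using False by simp
    from exists_zero_sums_few_multiples_of_q[OF p q X few no_sq_multiple_of_q few_val1_multiples]
    show ?thesis .
  qed
qed

lemma has_weighted_zs_subseq_of_length_ge_5:
  assumes p: "prime p" "2 < p" and q: "prime q" "7 \<le> q" and "p \<noteq> q" and "5 \<le> length xs"
  shows "has_weighted_zs_subseq (p^2 * q) (S_set (p^2 * q)) xs"
proof -
  have "\<exists>I\<subseteq>{..<length xs}. I \<noteq> {} \<and> unit_zero_sum p I (\<lambda>l. int (xs ! l))
      \<and> residue_zero_sum q I (\<lambda>l. int (xs ! l))"
    by (rule exists_local_zero_sums[OF p q finite_lessThan]) (simp add: \<open>5 \<le> length xs\<close>)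
  then obtain I where "I \<subseteq> {..<length xs} \<and> I \<noteq> {} \<and> unit_zero_sum p I (\<lambda>l. int (xs ! l))
      \<and> residue_zero_sum q I (\<lambda>l. int (xs ! l))"
    by (elim exE)
  then have "I \<subseteq> {..<length xs}" "I \<noteq> {}" "unit_zero_sum p I (\<lambda>l. int (xs ! l))"
    "residue_zero_sum q I (\<lambda>l. int (xs ! l))"
    by simp_all
  then show ?thesis
    by (rule has_weighted_zs_subseq_of_local_zero_sums[OF p(1) q(1) \<open>p \<noteq> q\<close>])
qed

section \<open>A sequence of four terms without weighted zero sum\<close>

lemma nonresidue_ratio_weights_vanish:
  assumes q: "prime q" "2 < q" and r: "Legendre r (int q) = -1"
    and a: "a = 0 \<or> Legendre a (int q) = 1" and b: "b = 0 \<or> Legendre b (int q) = 1"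
    and "[a = b * r] (mod int q)"
  shows "a = 0" "b = 0"
proof -
  have "Legendre a (int q) = - Legendre b (int q)"
    using Legendre_cong[OF \<open>[a = b * r] (mod int q)\<close>] Legendre_mult[OF q] r by simp
  then show "a = 0" "b = 0"
    using a b by (auto simp: Legendre_def)
qed

lemma lower_bound_weights_vanish:
  fixes p q :: nat and r :: int and e :: "nat \<Rightarrow> int"
  assumes p: "prime p" and q: "prime q" "2 < q" and "p \<noteq> q" and r: "Legendre r (int q) = -1"
    and weights: "\<And>i. e i = 0 \<or> coprime (e i) (int p) \<and> Legendre (e i) (int q) = 1"
    and dvd: "int p ^ 2 * int q dvd
      e 0 * int q + e 1 * (int p * int q) + e 2 * int p ^ 2 + e 3 * ((int q - r) * int p ^ 2)"
  shows "e 0 = 0" "e 1 = 0" "e 2 = 0" "e 3 = 0"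
proof -
  have pp: "prime (int p)" and qq: "prime (int q)"
    using p q by simp_all
  have "\<not> int q dvd int p ^ 2"
    using p q \<open>p \<noteq> q\<close> primes_dvd_imp_eq[of q p] by (auto simp: prime_dvd_power_iff)
  \<comment> \<open>Modulo q only the last two terms survive; the weights would have opposite symbols.\<close>
  moreover have "int q dvd int p ^ 2 * (e 2 - e 3 * r)"
  proof -
    have "int q dvd e 0 * int q + e 1 * (int p * int q) + e 2 * int p ^ 2 + e 3 * ((int q - r) * int p ^ 2)"
      using dvd dvd_mult_right by blast
    moreover have "e 0 * int q + e 1 * (int p * int q) + e 2 * int p ^ 2 + e 3 * ((int q - r) * int p ^ 2)
        = int q * (e 0 + e 1 * int p + e 3 * int p ^ 2) + int p ^ 2 * (e 2 - e 3 * r)"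
      by (simp add: algebra_simps)
    ultimately show ?thesis
      by (simp add: dvd_add_right_iff)
  qed
  ultimately have "[e 2 = e 3 * r] (mod int q)"
    using qq by (simp add: prime_dvd_mult_iff cong_iff_dvd_diff)
  with weights[of 2] weights[of 3] show e23: "e 2 = 0" "e 3 = 0"
    using nonresidue_ratio_weights_vanish[OF q r] by blast+
  \<comment> \<open>Modulo p^2 the first two terms remain, and they force p to divide both weights.\<close>
  have zero_if_dvd: "e i = 0" if "int p dvd e i" for i
    using weights[of i] that pp coprime_common_divisor[of "e i" "int p" "int p"] not_prime_unit by auto
  have p_not_q: "\<not> int p dvd int q"
    using p q \<open>p \<noteq> q\<close> primes_dvd_imp_eq[of p q] by auto
  have sq: "int p ^ 2 dvd e 0 * int q + int p * (e 1 * int q)"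
    using dvd e23 dvd_mult_left by (fastforce simp: algebra_simps)
  then have "int p dvd e 0 * int q + int p * (e 1 * int q)"
    using dvd_trans[of "int p" "int p ^ 2"] by (simp add: power2_eq_square)
  then have "int p dvd e 0 * int q"
    by (simp add: dvd_add_left_iff)
  then show e0: "e 0 = 0"
    using zero_if_dvd p_not_q pp by (simp add: prime_dvd_mult_iff)
  from sq have "int p * int p dvd int p * (e 1 * int q)"
    by (simp add: e0 power2_eq_square)
  then have "int p dvd e 1 * int q"
    using pp by (simp add: prime_gt_0_int)
  then show "e 1 = 0"
    using zero_if_dvd p_not_q pp by (simp add: prime_dvd_mult_iff)
qed

lemma has_weighted_zs_subseq_weights:
  assumes "has_weighted_zs_subseq n A xs"
  obtains e where "\<forall>i. e i = 0 \<or> e i \<in> A" "\<exists>i<length xs. e i \<in> A"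
    "(\<Sum>i<length xs. e i * xs ! i) mod n = 0"
proof -
  obtain I a where "I \<subseteq> {..<length xs} \<and> I \<noteq> {} \<and> (\<forall>i\<in>I. a i \<in> A) \<and> (\<Sum>i\<in>I. a i * xs ! i) mod n = 0"
    using assms unfolding has_weighted_zs_subseq_def by (elim exE)
  then have I: "I \<subseteq> {..<length xs}" "I \<noteq> {}" and a: "\<forall>i\<in>I. a i \<in> A"
    and sum: "(\<Sum>i\<in>I. a i * xs ! i) mod n = 0"
    by simp_all
  define e where "e i = (if i \<in> I then a i else 0)" for i
  have "(\<Sum>i\<in>I. a i * xs ! i) = (\<Sum>i\<in>{..<length xs} \<inter> I. a i * xs ! i)"
    using I(1) by (simp add: Int_absorb1)
  also have "\<dots> = (\<Sum>i<length xs. e i * xs ! i)"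
    unfolding e_def by (subst sum.inter_restrict) (auto intro: sum.cong)
  finally have sum_e: "(\<Sum>i<length xs. e i * xs ! i) mod n = 0"
    using sum by simp
  have "\<forall>i. e i = 0 \<or> e i \<in> A"
    using a unfolding e_def by simp
  moreover have "\<exists>i<length xs. e i \<in> A"
    using I a unfolding e_def by auto
  ultimately show ?thesis
    using sum_e by (rule that)
qed

lemma exists_sequence_without_weighted_zero_sum:
  assumes p: "prime p" and q: "prime q" "2 < q" and "p \<noteq> q"
  obtains xs where "length xs = 4" "set xs \<subseteq> {0..<p^2 * q}"
    "\<not> has_weighted_zs_subseq (p^2 * q) (S_set (p^2 * q)) xs"
proof -
  obtain r where r: "r < q" "Legendre (int r) (int q) = -1"
    using exists_quadratic_nonresidue[OF q] by blast
  then have "0 < r"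
    by (cases r) (simp_all add: Legendre_def)
  define xs where "xs = [q, p * q, p^2, (q - r) * p^2]"
  have "1 < p"
    using p prime_gt_1_nat by blast
  then have "1 * q < p^2 * q" "p * q < p^2 * q" "p^2 * 1 < p^2 * q" "(q - r) * p^2 < q * p^2"
    using one_less_power[of p 2] power_strict_increasing_iff[of p 1 2] \<open>0 < r\<close> r(1) q(2)
    by (simp_all only: mult_less_cancel2 mult_less_cancel1) simp_all
  then have xs_bound: "set xs \<subseteq> {0..<p^2 * q}"
    unfolding xs_def by (simp add: mult.commute)
  have no_zs: "\<not> has_weighted_zs_subseq (p^2 * q) (S_set (p^2 * q)) xs"
  proof
    assume "has_weighted_zs_subseq (p^2 * q) (S_set (p^2 * q)) xs"
    then obtain e where e: "\<forall>i. e i = 0 \<or> e i \<in> S_set (p^2 * q)" "\<exists>i<length xs. e i \<in> S_set (p^2 * q)"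
      and sum: "(\<Sum>i<length xs. e i * xs ! i) mod (p^2 * q) = 0"
      by (rule has_weighted_zs_subseq_weights)
    have S: "c \<in> S_set (p^2 * q) \<longleftrightarrow> c < p^2 * q \<and> coprime c p \<and> Legendre (int c) (int q) = 1" for c
      by (rule S_set_prime_square_times_prime_iff[OF p q(1) \<open>p \<noteq> q\<close>])
    have weights: "int (e i) = 0 \<or> coprime (int (e i)) (int p) \<and> Legendre (int (e i)) (int q) = 1" for i
      using spec[OF e(1), of i] S[of "e i"] by auto
    have "int (\<Sum>i<length xs. e i * xs ! i) = int (e 0) * int q + int (e 1) * (int p * int q)
        + int (e 2) * int p ^ 2 + int (e 3) * ((int q - int r) * int p ^ 2)"
      unfolding xs_def using r(1) by (simp add: numeral_eq_Suc lessThan_Suc of_nat_diff)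
    moreover have "int (p^2 * q) dvd int (\<Sum>i<length xs. e i * xs ! i)"
      unfolding int_dvd_int_iff using sum by (rule mod_0_imp_dvd)
    ultimately have "int p ^ 2 * int q dvd int (e 0) * int q + int (e 1) * (int p * int q)
        + int (e 2) * int p ^ 2 + int (e 3) * ((int q - int r) * int p ^ 2)"
      by simp
    from lower_bound_weights_vanish[OF p q \<open>p \<noteq> q\<close> r(2) weights this]
    have "\<forall>i<length xs. e i = 0"
      by (simp add: xs_def numeral_eq_Suc less_Suc_eq)
    moreover have "0 \<notin> S_set (p^2 * q)"
      using S[of 0] by (simp add: Legendre_def)
    ultimately show False
      using e(2) by auto
  qed
  show ?thesis
    using that[OF _ xs_bound no_zs] by (simp add: xs_def)
qed

section \<open>The weighted Davenport constant\<close>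

lemma has_weighted_zs_subseq_take:
  assumes "has_weighted_zs_subseq n A (take k xs)"
  shows "has_weighted_zs_subseq n A xs"
proof -
  obtain I a where "I \<subseteq> {..<length (take k xs)} \<and> I \<noteq> {} \<and> (\<forall>i\<in>I. a i \<in> A)
      \<and> (\<Sum>i\<in>I. a i * take k xs ! i) mod n = 0"
    using assms unfolding has_weighted_zs_subseq_def by (elim exE)
  moreover from this have "(\<Sum>i\<in>I. a i * take k xs ! i) = (\<Sum>i\<in>I. a i * xs ! i)"
    by (intro sum.cong) auto
  ultimately have "I \<subseteq> {..<length xs} \<and> I \<noteq> {} \<and> (\<forall>i\<in>I. a i \<in> A) \<and> (\<Sum>i\<in>I. a i * xs ! i) mod n = 0"
    by auto
  then show ?thesis
    unfolding has_weighted_zs_subseq_def by (intro exI[of _ I] exI[of _ a])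
qed

lemma davenport_weighted_eqI:
  assumes all: "\<forall>xs. length xs = Suc k \<and> set xs \<subseteq> {0..<n} \<longrightarrow> has_weighted_zs_subseq n A xs"
    and ys: "length ys = k" "set ys \<subseteq> {0..<n}" "\<not> has_weighted_zs_subseq n A ys"
  shows "davenport_weighted n A = Suc k"
  unfolding davenport_weighted_def
proof (rule Least_equality)
  show "\<forall>xs. length xs = Suc k \<and> set xs \<subseteq> {0..<n} \<longrightarrow> has_weighted_zs_subseq n A xs"
    by (rule all)
next
  fix m
  assume m: "\<forall>xs. length xs = m \<and> set xs \<subseteq> {0..<n} \<longrightarrow> has_weighted_zs_subseq n A xs"
  show "Suc k \<le> m"
  proof (rule ccontr)
    assume "\<not> Suc k \<le> m"
    then have "length (take m ys) = m" "set (take m ys) \<subseteq> {0..<n}"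
      using ys(1,2) set_take_subset[of m ys] by auto
    with m have "has_weighted_zs_subseq n A (take m ys)"
      by blast
    then have "has_weighted_zs_subseq n A ys"
      by (rule has_weighted_zs_subseq_take)
    with ys(3) show False
      by contradiction
  qed
qed

theorem theorem4p5:
  fixes p' q :: nat
  assumes "prime p'" and "prime q" and "p' \<noteq> q" and "p' \<ge> 7" and "q \<ge> 7"
  shows "davenport_weighted (p'^2 * q) (S_set (p'^2 * q)) = 5"
proof -
  have "2 < p'" "2 < q"
    using assms by simp_all
  obtain ys where ys: "length ys = 4" "set ys \<subseteq> {0..<p'^2 * q}"
    "\<not> has_weighted_zs_subseq (p'^2 * q) (S_set (p'^2 * q)) ys"
    using exists_sequence_without_weighted_zero_sum[OF assms(1,2) \<open>2 < q\<close> assms(3)] by blast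
  have "\<forall>xs. length xs = Suc 4 \<and> set xs \<subseteq> {0..<p'^2 * q}
      \<longrightarrow> has_weighted_zs_subseq (p'^2 * q) (S_set (p'^2 * q)) xs"
    using has_weighted_zs_subseq_of_length_ge_5[OF assms(1) \<open>2 < p'\<close> assms(2,5,3)] by simp
  from davenport_weighted_eqI[OF this ys] show ?thesis
    by simp
qed

end
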